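(* Assume (A1'). A function $u:J_T\to\mathbb{R}$ which is upper semicontinuous (resp. lower semicontinuous) is a sub-solution (resp. super-solution) of $u_t+H(x,u_x)=0$ on $J_T$ if and only if for every $\phi\in C^1_*(J_T)$ such that $u\le\phi$ (resp. $u\ge\phi$) on $J_T$ and $u=\phi$ at some $(t,x)\in J_T$: - if $x\in J_i^*$, then $\phi_t(t,x)+H_i(\phi_x(t,x))\le0$ (resp. $\ge0$); - if $x=0$, then either there exists $i\in I_N$ such that $\phi_t(t,0)+H_i(\phi^i_x(t,0))\le0$ (resp. $\ge0$), or $\phi_t(t,0)+\max_{i\in I_N}H_i^-(\phi^i_x(t,0))\le0$ (resp. $\ge0$).
   Context: Junction: fix an integer $N\ge1$ and $N$ distinct unit vectors $e_1,\dots,e_N\in\mathbb{R}^2$. Set $J_i=[0,\infty)e_i$, $J_i^*=J_i\setminus\{0\}$, $J=\bigcup_{i=1}^NJ_i$, $I_N=\{1,\dots,N\}$. Each $x\in J_i$ is written $x=x_ie_i$, $x_i\ge0$. $J$ carries the geodesic distance $d(x,y)=|x-y|$ if $x,y$ lie in a common branch, $d(x,y)=|x|+|y|$ otherwise. $J_T=(0,T)\times J$; balls are taken in $(0,\infty)\times J$. For $u$ on $J_T$, $u^i$ is its restriction to $(0,T)\times J_i$ as a function of $(t,x_i)$; $C^1_*(J_T)$ is the set of continuous $u$ with each $u^i\in C^1((0,T)\times[0,\infty))$; $u^i_x=\partial u^i/\partial x_i$, $u_x=u^i_x$ on $J_i^*$, $u_x(t,0)=(u^1_x(t,0),\dots,u^N_x(t,0))$.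 (A1'): for each $i\in I_N$, $H_i:\mathbb{R}\to\mathbb{R}$ is continuous with $H_i(p)\to+\infty$ as $|p|\to\infty$, and there is $p^i_0\in\mathbb{R}$ such that $H_i$ is non-increasing on $(-\infty,p_0^i]$ and non-decreasing on $[p_0^i,\infty)$. Then $H_i^-(p)=\inf_{q\le0}H_i(p+q)$. $H(x,p)=H_i(p)$ for $x\in J_i^*$, $H(0,p)=\max_iH_i^-(p_i)$ for $p\in\mathbb{R}^N$. Viscosity solutions: $u$ is a sub-solution (resp. super-solution) of $u_t+H(x,u_x)=0$ on $J_T$ if it is u.s.c. (resp. l.s.c.) and for every $\phi\in C^1_*(J_T)$, $P=(t,x)\in J_T$, $r>0$ with $u\le\phi$ (resp. $u\ge\phi$) on $B(P,r)$ and $u(P)=\phi(P)$: if $x\in J_i^*$ then $\phi_t(t,x)+H_i(\phi_x(t,x))\le0$ (resp. $\ge0$); if $x=0$ then $\phi_t(t,0)+\max_iH_i^-(\phi^i_x(t,0))\le0$ (resp. $\ge0$). *)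

theory Defs
  imports "HOL-Analysis.Analysis"
begin

text \<open>A point of J_T is encoded as (i,(t,x)) with i in {1..N},
 0<t<T, x>=0 (x = x_i the coordinate along branch i); points with x = 0 on different
 branches represent the same junction point 0. A function on J_T is encoded by its
 branch restrictions u i (t,x) = u^i(t,x_i), which must agree at x = 0.\<close>

definition inJT :: "nat \<Rightarrow> real \<Rightarrow> nat \<Rightarrow> real \<Rightarrow> real \<Rightarrow> bool" where
  "inJT N T i t x \<longleftrightarrow> i \<in> {1..N} \<and> 0 < t \<and> t < T \<and> 0 \<le> x"

definition jdist :: "nat \<Rightarrow> real \<Rightarrow> nat \<Rightarrow> real \<Rightarrow> real" where
  "jdist i x j y = (if i = j then \<bar>x - y\<bar> else x + y)"

definition pdist :: "nat \<Rightarrow> real \<Rightarrow> real \<Rightarrow> nat \<Rightarrow> real \<Rightarrow> real \<Rightarrow> real" where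
  "pdist i t x j s y = sqrt ((t - s)^2 + (jdist i x j y)^2)"

definition jfun :: "nat \<Rightarrow> real \<Rightarrow> (nat \<Rightarrow> real \<times> real \<Rightarrow> real) \<Rightarrow> bool" where
  "jfun N T u \<longleftrightarrow> (\<forall>i\<in>{1..N}. \<forall>j\<in>{1..N}. \<forall>t. 0 < t \<and> t < T \<longrightarrow> u i (t,0) = u j (t,0))"

definition usc_JT :: "nat \<Rightarrow> real \<Rightarrow> (nat \<Rightarrow> real \<times> real \<Rightarrow> real) \<Rightarrow> bool" where
  "usc_JT N T u \<longleftrightarrow> (\<forall>i t x. inJT N T i t x \<longrightarrow> (\<forall>\<epsilon>>0. \<exists>\<delta>>0. \<forall>j s y.
      inJT N T j s y \<and> pdist i t x j s y < \<delta> \<longrightarrow> u j (s,y) < u i (t,x) + \<epsilon>))"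

definition lsc_JT :: "nat \<Rightarrow> real \<Rightarrow> (nat \<Rightarrow> real \<times> real \<Rightarrow> real) \<Rightarrow> bool" where
  "lsc_JT N T u \<longleftrightarrow> (\<forall>i t x. inJT N T i t x \<longrightarrow> (\<forall>\<epsilon>>0. \<exists>\<delta>>0. \<forall>j s y.
      inJT N T j s y \<and> pdist i t x j s y < \<delta> \<longrightarrow> u j (s,y) > u i (t,x) - \<epsilon>))"

text \<open>phi in C^1_*(J_T), with phit i, phix i the (continuous) partial derivatives of phi^i
 on (0,T) x [0,inf) (one-sided at x = 0).\<close>
definition C1star :: "nat \<Rightarrow> real \<Rightarrow> (nat \<Rightarrow> real \<times> real \<Rightarrow> real)
    \<Rightarrow> (nat \<Rightarrow> real \<times> real \<Rightarrow> real) \<Rightarrow> (nat \<Rightarrow> real \<times> real \<Rightarrow> real) \<Rightarrow> bool" where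
  "C1star N T \<phi> \<phi>t \<phi>x \<longleftrightarrow> jfun N T \<phi> \<and>
     (\<forall>i\<in>{1..N}. continuous_on ({0<..<T} \<times> {0..}) (\<phi>t i)
        \<and> continuous_on ({0<..<T} \<times> {0..}) (\<phi>x i)
        \<and> (\<forall>p \<in> {0<..<T} \<times> {0..}.
             (\<phi> i has_derivative (\<lambda>(h,k). \<phi>t i p * h + \<phi>x i p * k))
               (at p within ({0<..<T} \<times> {0..}))))"

definition Hminus :: "(real \<Rightarrow> real) \<Rightarrow> real \<Rightarrow> real" where
  "Hminus Hi p = (INF q\<in>{..0}. Hi (p + q))"

definition A1' :: "nat \<Rightarrow> (nat \<Rightarrow> real \<Rightarrow> real) \<Rightarrow> bool" where
  "A1' N H \<longleftrightarrow> (\<forall>i\<in>{1..N}. continuous_on UNIV (H i)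
      \<and> filterlim (H i) at_top at_infinity
      \<and> (\<exists>p0. (\<forall>p q. p \<le> q \<and> q \<le> p0 \<longrightarrow> H i q \<le> H i p)
              \<and> (\<forall>p q. p0 \<le> p \<and> p \<le> q \<longrightarrow> H i p \<le> H i q)))"

definition H0 :: "nat \<Rightarrow> (nat \<Rightarrow> real \<Rightarrow> real) \<Rightarrow> (nat \<Rightarrow> real) \<Rightarrow> real" where
  "H0 N H p = Max ((\<lambda>i. Hminus (H i) (p i)) ` {1..N})"

definition subsolution :: "nat \<Rightarrow> real \<Rightarrow> (nat \<Rightarrow> real \<Rightarrow> real) \<Rightarrow> (nat \<Rightarrow> real \<times> real \<Rightarrow> real) \<Rightarrow> bool" where
  "subsolution N T H u \<longleftrightarrow> usc_JT N T u \<and>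
    (\<forall>\<phi> \<phi>t \<phi>x i t x r. C1star N T \<phi> \<phi>t \<phi>x \<and> inJT N T i t x \<and> 0 < r
       \<and> (\<forall>j s y. inJT N T j s y \<and> pdist i t x j s y < r \<longrightarrow> u j (s,y) \<le> \<phi> j (s,y))
       \<and> u i (t,x) = \<phi> i (t,x) \<longrightarrow>
         (0 < x \<longrightarrow> \<phi>t i (t,x) + H i (\<phi>x i (t,x)) \<le> 0)
       \<and> (x = 0 \<longrightarrow> \<phi>t i (t,0) + H0 N H (\<lambda>j. \<phi>x j (t,0)) \<le> 0))"

definition supersolution :: "nat \<Rightarrow> real \<Rightarrow> (nat \<Rightarrow> real \<Rightarrow> real) \<Rightarrow> (nat \<Rightarrow> real \<times> real \<Rightarrow> real) \<Rightarrow> bool" where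
  "supersolution N T H u \<longleftrightarrow> lsc_JT N T u \<and>
    (\<forall>\<phi> \<phi>t \<phi>x i t x r. C1star N T \<phi> \<phi>t \<phi>x \<and> inJT N T i t x \<and> 0 < r
       \<and> (\<forall>j s y. inJT N T j s y \<and> pdist i t x j s y < r \<longrightarrow> u j (s,y) \<ge> \<phi> j (s,y))
       \<and> u i (t,x) = \<phi> i (t,x) \<longrightarrow>
         (0 < x \<longrightarrow> \<phi>t i (t,x) + H i (\<phi>x i (t,x)) \<ge> 0)
       \<and> (x = 0 \<longrightarrow> \<phi>t i (t,0) + H0 N H (\<lambda>j. \<phi>x j (t,0)) \<ge> 0))"

end

theory Submission
  imports Defs
begin

text \<open>
  For each half of the theorem, "only if" is immediate: a global contact is a contact on the
  ball of radius 1, and the junction condition with the Hamiltonian H0 is one of the two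
  allowed alternatives.  "If" rests on two reductions.

  A test function touching u from above on a ball around a point can be
  changed away from that point into one touching u from above everywhere, with the same
  value and first derivatives at the point.  We add c * rho^2 * F, where rho is the squared
  distance to the point and F >= 0 is a C^1 majorant of u - phi on (0,T) x [0,inf).  F is
  obtained from the supremum of u - phi over the sublevel sets of the exhaustion function
  1/t + 1/(T-t) + x, made C^1 by two unit sliding averages.  The case of super-solutions
  follows by negation.

  Adding q_j * x to the j-th branch keeps the contact and,
  for q_j >= 0 (resp. q_j <= 0), the order with u, while it changes the spatial slopes to
  p_j + q_j.  Choosing the new slopes by coercivity of H_j (sub-solutions) or as the minimum
  points of H_j (super-solutions) turns the relaxed junction alternative into the condition
  involving H0.
\<close>


subsection \<open>Partial derivatives on subsets of the (t,x)-plane\<close>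

definition has_partials ::
    "(real \<times> real \<Rightarrow> real) \<Rightarrow> real \<Rightarrow> real \<Rightarrow> real \<times> real \<Rightarrow> (real \<times> real) set \<Rightarrow> bool" where
  "has_partials f a b p S \<longleftrightarrow> (f has_derivative (\<lambda>(h,k). a*h + b*k)) (at p within S)"

lemma has_partials_const: "has_partials (\<lambda>_. c) 0 0 p S"
  unfolding has_partials_def by (rule has_derivative_eq_rhs[OF has_derivative_const]) auto

lemma has_partials_fst: "has_partials fst 1 0 p S"
  unfolding has_partials_def
  by (rule has_derivative_eq_rhs[OF has_derivative_fst[OF has_derivative_ident]]) auto

lemma has_partials_snd: "has_partials snd 0 1 p S"
  unfolding has_partials_def
  by (rule has_derivative_eq_rhs[OF has_derivative_snd[OF has_derivative_ident]]) auto

lemma has_partials_add: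
  "has_partials f a b p S \<Longrightarrow> has_partials g c d p S \<Longrightarrow> has_partials (\<lambda>q. f q + g q) (a+c) (b+d) p S"
  unfolding has_partials_def
  by (rule has_derivative_eq_rhs[OF has_derivative_add]) (auto simp: algebra_simps)

lemma has_partials_diff:
  "has_partials f a b p S \<Longrightarrow> has_partials g c d p S \<Longrightarrow> has_partials (\<lambda>q. f q - g q) (a-c) (b-d) p S"
  unfolding has_partials_def
  by (rule has_derivative_eq_rhs[OF has_derivative_diff]) (auto simp: algebra_simps)

lemma has_partials_mult:
  "has_partials f a b p S \<Longrightarrow> has_partials g c d p S
   \<Longrightarrow> has_partials (\<lambda>q. f q * g q) (f p * c + a * g p) (f p * d + b * g p) p S"
  unfolding has_partials_def
  by (rule has_derivative_eq_rhs[OF has_derivative_mult]) (auto simp: algebra_simps)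

lemma has_partials_chain:
  assumes "(g has_real_derivative e) (at (f p))" and "has_partials f a b p S"
  shows "has_partials (\<lambda>q. g (f q)) (e*a) (e*b) p S"
  using has_derivative_compose[OF assms(2)[unfolded has_partials_def]
      assms(1)[unfolded has_field_derivative_def]]
  unfolding has_partials_def by (rule has_derivative_eq_rhs) (auto simp: algebra_simps)

lemma has_partials_cong:
  "has_partials f a b p S \<Longrightarrow> (\<And>q. g q = f q) \<Longrightarrow> a = a' \<Longrightarrow> b = b' \<Longrightarrow> has_partials g a' b' p S"
  by (metis ext)

lemma has_partials_continuous: "has_partials f a b p S \<Longrightarrow> continuous (at p within S) f"
  unfolding has_partials_def by (rule has_derivative_continuous)


subsection \<open>A C^1 majorant of a monotone function\<close>

text \<open>Average of f over the unit interval starting at w; averaging gains one degree of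
  regularity and, for monotone minorants, stays above them.\<close>
definition unit_average :: "(real \<Rightarrow> real) \<Rightarrow> real \<Rightarrow> real" where
  "unit_average f w = integral {w..w+1} f"

lemma unit_average_ge:
  fixes h K :: "real \<Rightarrow> real"
  assumes mh: "mono h" and K: "K integrable_on {z..z+1}" and hK: "\<And>w. w \<in> {z..z+1} \<Longrightarrow> h w \<le> K w"
  shows "h z \<le> unit_average K z"
proof -
  have "h z \<le> K w" if "w \<in> {z..z+1}" for w
    using monoD[OF mh, of z w] hK[OF that] that by auto
  then have "integral {z..z+1} (\<lambda>_. h z) \<le> integral {z..z+1} K"
    by (intro integral_le K) auto
  then show ?thesis by (simp add: unit_average_def integral_const_real)
qed

lemma unit_average_split:
  assumes "0 \<le> w" and f: "\<And>b. f integrable_on {0..b}"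
  shows "unit_average f w = integral {0..w+1} f - integral {0..w} f"
  using Henstock_Kurzweil_Integration.integral_combine[where a=0 and c=w and b="w+1" and f=f,
      OF assms(1) _ f]
  unfolding unit_average_def by simp

lemma unit_average_continuous:
  assumes f: "\<And>a b. f integrable_on {a..b}"
  shows "continuous_on {0..b} (unit_average f)"
proof -
  define I where "I w = integral {0..w} f" for w
  have I: "continuous_on {0..c} I" for c
    unfolding I_def by (rule indefinite_integral_continuous_1[OF f])
  have "continuous_on {0..b} (\<lambda>w. I (w+1))"
    by (rule continuous_on_compose2[OF I[of "b+1"]]) (auto intro!: continuous_intros)
  then have "continuous_on {0..b} (\<lambda>w. I (w+1) - I w)"
    using I[of b] by (intro continuous_intros)
  then show ?thesis
    by (rule continuous_on_eq) (simp add: unit_average_split[OF _ f] I_def)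
qed

lemma unit_average_deriv:
  assumes K: "\<And>b. continuous_on {0..b} K" and z: "0 < z"
  shows "(unit_average K has_real_derivative K (z+1) - K z) (at z)"
proof -
  define J where "J y = integral {0..y} K" for y
  have J': "(J has_real_derivative K y) (at y)" if "0 < y" for y
  proof -
    have "(J has_real_derivative K y) (at y within {0..y+1})"
      unfolding J_def by (rule integral_has_real_derivative[OF K]) (use that in auto)
    moreover have "y \<in> interior {0..y+1}" using that by simp
    ultimately show ?thesis by (metis at_within_interior)
  qed
  have "0 < z + 1" using z by simp
  have "((\<lambda>y. J (y+1)) has_real_derivative K (z+1) * (1+0)) (at z)"
    by (rule DERIV_chain2[OF J'[OF \<open>0 < z + 1\<close>] DERIV_add[OF DERIV_ident DERIV_const]])
  then have D: "((\<lambda>y. J (y+1) - J y) has_real_derivative K (z+1) - K z) (at z)"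
    using DERIV_diff[OF _ J'[OF z]] by simp
  have E: "J (y+1) - J y = unit_average K y" if "y \<in> {0<..}" for y
    using unit_average_split[of y K] integrable_continuous_real[OF K] that
    unfolding J_def by simp
  show ?thesis
    by (rule has_field_derivative_transform_within_open[OF D open_greaterThan _ E]) (use z in simp)
qed

lemma mono_C1_majorant:
  fixes h :: "real \<Rightarrow> real"
  assumes mh: "mono h"
  shows "\<exists>G G'. (\<forall>z>0. (G has_real_derivative G' z) (at z)) \<and> continuous_on {0<..} G'
          \<and> (\<forall>z\<ge>0. h z \<le> G z)"
proof -
  have hint: "h integrable_on {a..b}" for a b
    by (rule integrable_on_mono_on) (use mh in \<open>auto simp: mono_on_def mono_def\<close>)
  define K where "K = unit_average h"
  have Kcont: "continuous_on {0..b} K" for b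
    unfolding K_def by (rule unit_average_continuous[OF hint])
  have Kge: "h w \<le> K w" for w
    unfolding K_def by (rule unit_average_ge[OF mh hint]) simp
  define G' where "G' z = K (z+1) - K z" for z
  have "(unit_average K has_real_derivative G' z) (at z)" if "z > 0" for z
    unfolding G'_def by (rule unit_average_deriv[OF Kcont that])
  moreover have "continuous_on {0<..} G'"
  proof -
    have K_at: "isCont K w" if "w > 0" for w
      using continuous_on_interior[OF Kcont[of "w+1"]] that by auto
    have "isCont G' w" if "w > 0" for w
    proof -
      have "isCont (\<lambda>y. K (y+1)) w"
        by (rule isCont_o2[where g=K and f="\<lambda>y. y+1"]) (use that K_at in auto)
      then show ?thesis unfolding G'_def using K_at[OF that] by (rule isCont_diff)
    qed
    then show ?thesis by (auto intro!: continuous_at_imp_continuous_on)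
  qed
  moreover have "h z \<le> unit_average K z" if "z \<ge> 0" for z
  proof (rule unit_average_ge[OF mh])
    show "K integrable_on {z..z+1}"
      using integrable_continuous_real[OF continuous_on_subset[OF Kcont[of "z+1"]]] that by auto
  qed (rule Kge)
  ultimately show ?thesis by blast
qed



subsection \<open>A C^1 majorant on the half strip (0,T) x [0,inf)\<close>

lemma usc_bounded_above_on_compact:
  fixes f :: "'a::metric_space \<Rightarrow> real"
  assumes C: "compact C" and u: "\<forall>p\<in>C. \<exists>\<delta>>0. \<forall>q\<in>C. dist q p < \<delta> \<longrightarrow> f q < f p + 1"
  shows "\<exists>B. \<forall>q\<in>C. f q \<le> B"
proof -
  from u obtain d where d: "\<forall>p\<in>C. d p > 0 \<and> (\<forall>q\<in>C. dist q p < d p \<longrightarrow> f q < f p + 1)"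
    by metis
  have "C \<subseteq> (\<Union>p\<in>C. ball p (d p))" using d by force
  then obtain K where K: "K \<subseteq> C" "finite K" "C \<subseteq> (\<Union>p\<in>K. ball p (d p))"
    using compactE_image[OF C, of C "\<lambda>p. ball p (d p)"] by auto
  define B where "B = Max (insert 0 ((\<lambda>p. f p + 1) ` K))"
  have "f q \<le> B" if q: "q \<in> C" for q
  proof -
    from K(3) q obtain p where p: "p \<in> K" "q \<in> ball p (d p)" by auto
    then have "f q < f p + 1" using d K(1) q by (auto simp: dist_commute)
    moreover have "f p + 1 \<le> B" unfolding B_def using K(2) p(1) by (intro Max_ge) auto
    ultimately show ?thesis by simp
  qed
  then show ?thesis by blast
qed

abbreviation half_strip :: "real \<Rightarrow> (real \<times> real) set" where
  "half_strip T \<equiv> {0<..<T} \<times> {0..}"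

text \<open>An exhaustion function of the half strip: its sublevel sets are compact.\<close>
definition exhaustion :: "real \<Rightarrow> real \<times> real \<Rightarrow> real" where
  "exhaustion T p = 1 / fst p + 1 / (T - fst p) + snd p"

lemma exhaustion_pos: "p \<in> half_strip T \<Longrightarrow> 0 < exhaustion T p"
  unfolding exhaustion_def by (cases p) (auto intro!: add_pos_nonneg)

lemma exhaustion_sublevel:
  assumes p: "p \<in> half_strip T" and z: "exhaustion T p \<le> z"
  shows "p \<in> {1/z..T-1/z} \<times> {0..z}"
proof -
  obtain s y where sy: "p = (s,y)" "0 < s" "s < T" "0 \<le> y" using p by auto
  have pos: "1/s > 0" "1/(T-s) > 0" using sy by auto
  have z_sum: "1/s + 1/(T-s) + y \<le> z" using z sy(1) unfolding exhaustion_def by simp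
  then have "0 < z" using pos sy by linarith
  have "1/s \<le> z" "1/(T-s) \<le> z" "y \<le> z" using pos sy z_sum by linarith+
  then have "1/z \<le> s" "1/z \<le> T - s"
    using \<open>0 < z\<close> sy by (simp_all add: field_simps)
  then show ?thesis using sy \<open>y \<le> z\<close> by auto
qed

lemma exhaustion_has_partials:
  assumes p: "p \<in> half_strip T"
  shows "has_partials (exhaustion T) (- 1 / (fst p)^2 + 1 / (T - fst p)^2) 1 p (half_strip T)"
proof -
  have s: "0 < fst p" "fst p < T" using p by auto
  have "((\<lambda>s. 1/s + 1/(T-s)) has_real_derivative (- 1 / (fst p)^2 + 1 / (T - fst p)^2)) (at (fst p))"
    using s by (auto intro!: derivative_eq_intros simp: power2_eq_square field_simps)
  from has_partials_add[OF has_partials_chain[OF this has_partials_fst] has_partials_snd]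
  show ?thesis by (rule has_partials_cong) (auto simp: exhaustion_def)
qed

lemma exhaustion_continuous: "continuous_on (half_strip T) (exhaustion T)"
  unfolding exhaustion_def by (intro continuous_intros) auto

lemma sublevel_bounded_above:
  fixes f :: "nat \<Rightarrow> real \<times> real \<Rightarrow> real"
  assumes usc: "\<forall>j\<in>{1..N}. \<forall>p\<in>half_strip T. \<exists>\<delta>>0. \<forall>q\<in>half_strip T. dist q p < \<delta> \<longrightarrow> f j q < f j p + 1"
  shows "\<exists>B. \<forall>j\<in>{1..N}. \<forall>p\<in>half_strip T. exhaustion T p \<le> z \<longrightarrow> f j p \<le> B"
proof (cases "z > 0")
  case False
  then show ?thesis using exhaustion_pos by (meson less_le_trans)
next
  case True
  define R where "R = {1/z..T-1/z} \<times> {0..z}"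
  have "0 < 1/z" using True by simp
  have R_strip: "R \<subseteq> half_strip T"
  proof
    fix p assume "p \<in> R"
    then have "1/z \<le> fst p" "fst p \<le> T - 1/z" "0 \<le> snd p" unfolding R_def by auto
    then have "0 < fst p" "fst p < T" "0 \<le> snd p" using \<open>0 < 1/z\<close> by linarith+
    then show "p \<in> half_strip T" by (cases p) auto
  qed
  have "\<exists>B. \<forall>q\<in>R. f j q \<le> B" if j: "j \<in> {1..N}" for j
  proof (rule usc_bounded_above_on_compact)
    show "compact R" unfolding R_def by (intro compact_Times compact_Icc)
    show "\<forall>p\<in>R. \<exists>\<delta>>0. \<forall>q\<in>R. dist q p < \<delta> \<longrightarrow> f j q < f j p + 1"
      using usc j R_strip by blast
  qed
  then obtain B where B: "\<forall>j\<in>{1..N}. \<forall>q\<in>R. f j q \<le> B j" by metis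
  have "f j p \<le> Max (B ` {1..N})"
    if "j \<in> {1..N}" "p \<in> half_strip T" "exhaustion T p \<le> z" for j p
  proof -
    have "f j p \<le> B j" using B exhaustion_sublevel[OF that(2,3)] that(1) unfolding R_def by blast
    also have "B j \<le> Max (B ` {1..N})" using that(1) by (intro Max_ge) auto
    finally show ?thesis .
  qed
  then show ?thesis by blast
qed

lemma C1_majorant_on_half_strip:
  fixes f :: "nat \<Rightarrow> real \<times> real \<Rightarrow> real"
  assumes usc: "\<forall>j\<in>{1..N}. \<forall>p\<in>half_strip T. \<exists>\<delta>>0. \<forall>q\<in>half_strip T. dist q p < \<delta> \<longrightarrow> f j q < f j p + 1"
  shows "\<exists>F Ft Fx. (\<forall>p\<in>half_strip T. has_partials F (Ft p) (Fx p) p (half_strip T))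
     \<and> continuous_on (half_strip T) Ft \<and> continuous_on (half_strip T) Fx
     \<and> (\<forall>p\<in>half_strip T. 0 \<le> F p) \<and> (\<forall>j\<in>{1..N}. \<forall>p\<in>half_strip T. f j p \<le> F p)"
proof -
  define S where
    "S z = insert 0 {f j p |j p. j \<in> {1..N} \<and> p \<in> half_strip T \<and> exhaustion T p \<le> z}" for z
  define h where "h z = Sup (S z)" for z
  have bdd: "bdd_above (S z)" for z
  proof -
    obtain B where B: "\<forall>j\<in>{1..N}. \<forall>p\<in>half_strip T. exhaustion T p \<le> z \<longrightarrow> f j p \<le> B"
      using sublevel_bounded_above[OF usc] by blast
    have "x \<le> max 0 B" if "x \<in> S z" for x
      using that B unfolding S_def by (auto intro: max.coboundedI2)
    then show ?thesis by (rule bdd_aboveI)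
  qed
  have "mono h"
  proof (rule monoI)
    fix z z' :: real assume "z \<le> z'"
    then have "S z \<subseteq> S z'" unfolding S_def by fastforce
    moreover have "S z \<noteq> {}" unfolding S_def by simp
    ultimately show "h z \<le> h z'" unfolding h_def using cSup_subset_mono[OF _ bdd] by blast
  qed
  then obtain G G' where G: "\<forall>z>0. (G has_real_derivative G' z) (at z)"
    "continuous_on {0<..} G'" "\<forall>z\<ge>0. h z \<le> G z"
    using mono_C1_majorant by blast
  have h_upper: "x \<le> h z" if "x \<in> S z" for x z
    unfolding h_def using that by (rule cSup_upper[OF _ bdd])
  define F where "F p = G (exhaustion T p)" for p
  define Fx where "Fx p = G' (exhaustion T p)" for p
  define Ft where "Ft p = Fx p * (- 1 / (fst p)^2 + 1 / (T - fst p)^2)" for p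
  have "has_partials F (Ft p) (Fx p) p (half_strip T)" if p: "p \<in> half_strip T" for p
    using has_partials_chain[OF G(1)[rule_format, OF exhaustion_pos[OF p]] exhaustion_has_partials[OF p]]
    by (rule has_partials_cong) (auto simp: F_def Ft_def Fx_def)
  moreover have Fx: "continuous_on (half_strip T) Fx"
    unfolding Fx_def
    by (rule continuous_on_compose2[OF G(2) exhaustion_continuous]) (use exhaustion_pos in auto)
  moreover have "continuous_on (half_strip T) Ft"
    unfolding Ft_def using Fx by (intro continuous_intros) auto
  moreover have "0 \<le> F p" if "p \<in> half_strip T" for p
    using h_upper[of 0] G(3) exhaustion_pos[OF that] unfolding F_def S_def
    by (meson insertI1 less_imp_le order_trans)
  moreover have "f j p \<le> F p" if "j \<in> {1..N}" "p \<in> half_strip T" for j p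
    using h_upper[of "f j p" "exhaustion T p"] G(3) exhaustion_pos[OF that(2)] that
    unfolding F_def S_def by (smt (verit, best) mem_Collect_eq insertCI)
  ultimately show ?thesis by blast
qed


subsection \<open>The algebra of test functions\<close>

lemma jfunD: "jfun N T u \<Longrightarrow> i \<in> {1..N} \<Longrightarrow> j \<in> {1..N} \<Longrightarrow> 0 < t \<Longrightarrow> t < T \<Longrightarrow> u i (t,0) = u j (t,0)"
  unfolding jfun_def by blast

lemma jfun_combine:
  assumes "jfun N T f" "jfun N T g"
  shows "jfun N T (\<lambda>j p. c (f j p) (g j p))"
  unfolding jfun_def
proof (intro ballI allI impI)
  fix i k t assume "i \<in> {1..N}" "k \<in> {1..N}" "0 < t \<and> t < T"
  then show "c (f i (t,0)) (g i (t,0)) = c (f k (t,0)) (g k (t,0))"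
    using jfunD[OF assms(1)] jfunD[OF assms(2)] by metis
qed

lemma C1star_intro:
  assumes "jfun N T \<phi>"
    and "\<And>j. j \<in> {1..N} \<Longrightarrow> continuous_on (half_strip T) (\<phi>t j)"
    and "\<And>j. j \<in> {1..N} \<Longrightarrow> continuous_on (half_strip T) (\<phi>x j)"
    and "\<And>j p. j \<in> {1..N} \<Longrightarrow> p \<in> half_strip T
           \<Longrightarrow> has_partials (\<phi> j) (\<phi>t j p) (\<phi>x j p) p (half_strip T)"
  shows "C1star N T \<phi> \<phi>t \<phi>x"
  using assms unfolding C1star_def has_partials_def by blast

lemma C1star_jfun: "C1star N T \<phi> \<phi>t \<phi>x \<Longrightarrow> jfun N T \<phi>"
  unfolding C1star_def by blast

lemma C1star_has_partials:
  "C1star N T \<phi> \<phi>t \<phi>x \<Longrightarrow> j \<in> {1..N} \<Longrightarrow> p \<in> half_strip T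
   \<Longrightarrow> has_partials (\<phi> j) (\<phi>t j p) (\<phi>x j p) p (half_strip T)"
  unfolding C1star_def has_partials_def by blast

lemma C1star_continuous:
  assumes \<phi>: "C1star N T \<phi> \<phi>t \<phi>x" and j: "j \<in> {1..N}"
  shows "continuous_on (half_strip T) (\<phi> j)" "continuous_on (half_strip T) (\<phi>t j)"
    "continuous_on (half_strip T) (\<phi>x j)"
proof -
  show "continuous_on (half_strip T) (\<phi> j)"
    using has_partials_continuous[OF C1star_has_partials[OF \<phi> j]]
    by (simp add: continuous_on_eq_continuous_within)
  show "continuous_on (half_strip T) (\<phi>t j)" "continuous_on (half_strip T) (\<phi>x j)"
    using \<phi> j unfolding C1star_def by blast+
qed

lemma C1star_cong:
  assumes "C1star N T \<phi> \<phi>t \<phi>x"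
    and "\<And>j p. \<psi> j p = \<phi> j p" "\<And>j p. \<psi>t j p = \<phi>t j p" "\<And>j p. \<psi>x j p = \<phi>x j p"
  shows "C1star N T \<psi> \<psi>t \<psi>x"
proof -
  have "\<psi> = \<phi>" "\<psi>t = \<phi>t" "\<psi>x = \<phi>x" using assms(2-4) by (simp_all add: fun_eq_iff)
  then show ?thesis using assms(1) by simp
qed

lemma C1star_const: "C1star N T (\<lambda>j p. c) (\<lambda>j p. 0) (\<lambda>j p. 0)"
  by (rule C1star_intro) (auto simp: jfun_def has_partials_const)

text \<open>The function equal to q_j * x on branch j: it vanishes at the junction, so it is a
  test function for any choice of slopes q_j.\<close>
lemma C1star_tilt: "C1star N T (\<lambda>j p. q j * snd p) (\<lambda>j p. 0) (\<lambda>j p. q j)"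
proof (rule C1star_intro)
  fix j p
  show "has_partials (\<lambda>p. q j * snd p) 0 (q j) p (half_strip T)"
    by (rule has_partials_cong[OF has_partials_mult[OF has_partials_const has_partials_snd]]) auto
qed (auto simp: jfun_def)

lemma C1star_add:
  assumes f: "C1star N T f ft fx" and g: "C1star N T g gt gx"
  shows "C1star N T (\<lambda>j p. f j p + g j p) (\<lambda>j p. ft j p + gt j p) (\<lambda>j p. fx j p + gx j p)"
proof (rule C1star_intro)
  show "jfun N T (\<lambda>j p. f j p + g j p)"
    by (rule jfun_combine[OF C1star_jfun[OF f] C1star_jfun[OF g]])
  fix j assume j: "j \<in> {1..N}"
  show "continuous_on (half_strip T) (\<lambda>p. ft j p + gt j p)"
    "continuous_on (half_strip T) (\<lambda>p. fx j p + gx j p)"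
    using C1star_continuous[OF f j] C1star_continuous[OF g j] by (auto intro: continuous_intros)
  fix p assume p: "p \<in> half_strip T"
  show "has_partials (\<lambda>p. f j p + g j p) (ft j p + gt j p) (fx j p + gx j p) p (half_strip T)"
    by (rule has_partials_add[OF C1star_has_partials[OF f j p] C1star_has_partials[OF g j p]])
qed

lemma C1star_mult:
  assumes f: "C1star N T f ft fx" and g: "C1star N T g gt gx"
  shows "C1star N T (\<lambda>j p. f j p * g j p)
           (\<lambda>j p. f j p * gt j p + ft j p * g j p) (\<lambda>j p. f j p * gx j p + fx j p * g j p)"
proof (rule C1star_intro)
  show "jfun N T (\<lambda>j p. f j p * g j p)"
    by (rule jfun_combine[OF C1star_jfun[OF f] C1star_jfun[OF g]])
  fix j assume j: "j \<in> {1..N}"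
  show "continuous_on (half_strip T) (\<lambda>p. f j p * gt j p + ft j p * g j p)"
    "continuous_on (half_strip T) (\<lambda>p. f j p * gx j p + fx j p * g j p)"
    using C1star_continuous[OF f j] C1star_continuous[OF g j] by (auto intro!: continuous_intros)
  fix p assume p: "p \<in> half_strip T"
  show "has_partials (\<lambda>p. f j p * g j p) (f j p * gt j p + ft j p * g j p)
      (f j p * gx j p + fx j p * g j p) p (half_strip T)"
    by (rule has_partials_mult[OF C1star_has_partials[OF f j p] C1star_has_partials[OF g j p]])
qed

lemma C1star_scale:
  assumes "C1star N T \<phi> \<phi>t \<phi>x"
  shows "C1star N T (\<lambda>j p. c * \<phi> j p) (\<lambda>j p. c * \<phi>t j p) (\<lambda>j p. c * \<phi>x j p)"
  by (rule C1star_cong[OF C1star_mult[OF C1star_const assms]]) auto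

lemma C1star_neg:
  assumes "C1star N T \<phi> \<phi>t \<phi>x"
  shows "C1star N T (\<lambda>j p. - \<phi> j p) (\<lambda>j p. - \<phi>t j p) (\<lambda>j p. - \<phi>x j p)"
  by (rule C1star_cong[OF C1star_scale[OF assms, of "-1"]]) auto

lemma C1star_tilted:
  assumes "C1star N T \<phi> \<phi>t \<phi>x"
  shows "C1star N T (\<lambda>j p. \<phi> j p + q j * snd p) \<phi>t (\<lambda>j p. \<phi>x j p + q j)"
  by (rule C1star_cong[OF C1star_add[OF assms C1star_tilt]]) auto

text \<open>At the junction, the restriction of a test function to any branch has the same
  time derivative, since all branches share the values phi(s,0).\<close>
lemma C1star_junction_time_derivative:
  assumes \<phi>: "C1star N T \<phi> \<phi>t \<phi>x" and j: "j \<in> {1..N}" and t: "0 < t" "t < T"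
  shows "((\<lambda>s. \<phi> j (s,0)) has_derivative (\<lambda>h. \<phi>t j (t,0) * h)) (at t)"
proof -
  have tD: "(t,0) \<in> half_strip T" using t by auto
  have d: "(\<phi> j has_derivative (\<lambda>(h,k). \<phi>t j (t,0) * h + \<phi>x j (t,0) * k)) (at (t,0) within half_strip T)"
    using C1star_has_partials[OF \<phi> j tD] unfolding has_partials_def .
  have sub: "(\<lambda>s. (s, 0::real)) ` {0<..<T} \<subseteq> half_strip T" by auto
  have g: "((\<lambda>s. (s, 0::real)) has_derivative (\<lambda>h. (h, 0))) (at t within {0<..<T})"
    by (rule has_derivative_eq_rhs[OF has_derivative_Pair[OF has_derivative_ident has_derivative_const]]) auto
  have "((\<lambda>s. \<phi> j (s,0)) has_derivative (\<lambda>h. (\<lambda>(h,k). \<phi>t j (t,0) * h + \<phi>x j (t,0) * k) (h, 0)))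
      (at t within {0<..<T})"
    by (rule has_derivative_in_compose[OF g has_derivative_subset[OF d sub]])
  moreover have "at t within {0<..<T} = at t" by (rule at_within_open) (use t in auto)
  ultimately show ?thesis by simp
qed

lemma C1star_junction_dt_eq:
  assumes \<phi>: "C1star N T \<phi> \<phi>t \<phi>x" and j: "j \<in> {1..N}" and k: "k \<in> {1..N}" and t: "0 < t" "t < T"
  shows "\<phi>t j (t,0) = \<phi>t k (t,0)"
proof -
  have "\<phi> k (s,0) = \<phi> j (s,0)" if "s \<in> {0<..<T}" for s
    using jfunD[OF C1star_jfun[OF \<phi>] k j] that by simp
  then have "((\<lambda>s. \<phi> j (s,0)) has_derivative (\<lambda>h. \<phi>t k (t,0) * h)) (at t)"
    using has_derivative_transform_within_open[OF C1star_junction_time_derivative[OF \<phi> k t]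
        open_greaterThanLessThan] t by simp
  from has_derivative_unique[OF C1star_junction_time_derivative[OF \<phi> j t] this]
  have "(\<lambda>h. \<phi>t j (t,0) * h) 1 = (\<lambda>h. \<phi>t k (t,0) * h) 1" by metis
  then show ?thesis by simp
qed


subsection \<open>Localization: from contact on a ball to global contact\<close>

lemma pdist_sq: "(pdist i t x j s y)^2 = (s - t)^2 + (y + (if i = j then -x else x))^2"
proof -
  have "(pdist i t x j s y)^2 = (t - s)^2 + (jdist i x j y)^2"
    unfolding pdist_def by simp
  moreover have "(jdist i x j y)^2 = (y + (if i = j then -x else x))^2"
    unfolding jdist_def by (cases "i = j") (auto simp: power2_eq_square algebra_simps)
  ultimately show ?thesis by (simp add: power2_eq_square algebra_simps)
qed

lemma pdist_same_branch: "pdist j t x j s y = dist (s,y) (t,x)"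
  unfolding pdist_def jdist_def dist_Pair_Pair dist_real_def by (simp add: power2_eq_square algebra_simps)

lemma pdist_self: "pdist i t x i t x = 0"
  unfolding pdist_def jdist_def by simp

lemma pdist_junction: "pdist i t 0 j t 0 = 0"
  unfolding pdist_def jdist_def by simp

lemma C1star_sq_pdist:
  "C1star N T (\<lambda>j q. (pdist i t x j (fst q) (snd q))^2)
     (\<lambda>j q. 2 * (fst q - t)) (\<lambda>j q. 2 * (snd q + (if i = j then -x else x)))"
proof (rule C1star_intro)
  show "jfun N T (\<lambda>j q. (pdist i t x j (fst q) (snd q))^2)"
    unfolding jfun_def pdist_sq by simp
  fix j p
  define e where "e = (if i = j then -x else x)"
  have a: "has_partials (\<lambda>q. fst q - t) (1 - 0) (0 - 0) p (half_strip T)"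
    by (rule has_partials_diff[OF has_partials_fst has_partials_const])
  have b: "has_partials (\<lambda>q. snd q + e) (0 + 0) (1 + 0) p (half_strip T)"
    by (rule has_partials_add[OF has_partials_snd has_partials_const])
  show "has_partials (\<lambda>q. (pdist i t x j (fst q) (snd q))^2) (2 * (fst p - t))
      (2 * (snd p + (if i = j then -x else x))) p (half_strip T)"
    by (rule has_partials_cong[OF has_partials_add[OF has_partials_mult[OF a a] has_partials_mult[OF b b]]])
       (auto simp: pdist_sq[unfolded power2_eq_square] e_def power2_eq_square)
qed (auto intro!: continuous_intros)

lemma usc_JT_neg: "lsc_JT N T u \<Longrightarrow> usc_JT N T (\<lambda>j p. - u j p)"
  unfolding usc_JT_def lsc_JT_def by (metis minus_less_iff minus_diff_eq add.commute diff_conv_add_uminus)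

lemma usc_minus_C1star_locally_bounded:
  assumes uv: "usc_JT N T v" and \<phi>: "C1star N T \<phi> \<phi>t \<phi>x"
  shows "\<forall>j\<in>{1..N}. \<forall>p\<in>half_strip T. \<exists>\<delta>>0. \<forall>q\<in>half_strip T.
           dist q p < \<delta> \<longrightarrow> v j q - \<phi> j q < (v j p - \<phi> j p) + 1"
proof (intro ballI)
  fix j p assume j: "j \<in> {1..N}" and p: "p \<in> half_strip T"
  obtain t0 x0 where p0: "p = (t0,x0)" by (cases p)
  have "inJT N T j t0 x0" using j p p0 unfolding inJT_def by simp
  moreover have half: "(1/2::real) > 0" by simp
  ultimately obtain d1 where d1: "d1 > 0" "\<forall>j' s y. inJT N T j' s y \<and> pdist j t0 x0 j' s y < d1
      \<longrightarrow> v j' (s,y) < v j (t0,x0) + 1/2"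
    using uv unfolding usc_JT_def by blast
  have "continuous (at p within half_strip T) (\<phi> j)"
    using has_partials_continuous[OF C1star_has_partials[OF \<phi> j p]] .
  then obtain d2 where d2: "d2 > 0" "\<forall>q\<in>half_strip T. dist q p < d2 \<longrightarrow> dist (\<phi> j q) (\<phi> j p) < 1/2"
    unfolding continuous_within_eps_delta using half by blast
  show "\<exists>\<delta>>0. \<forall>q\<in>half_strip T. dist q p < \<delta> \<longrightarrow> v j q - \<phi> j q < (v j p - \<phi> j p) + 1"
  proof (intro exI[of _ "min d1 d2"] conjI ballI impI)
    show "0 < min d1 d2" using d1 d2 by simp
    fix q assume q: "q \<in> half_strip T" and dq: "dist q p < min d1 d2"
    obtain s y where q0: "q = (s,y)" by (cases q)
    have "v j q < v j p + 1/2"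
      using d1(2) dq q j p0 q0 pdist_same_branch[of j t0 x0 s y] unfolding inJT_def by auto
    moreover have "dist (\<phi> j q) (\<phi> j p) < 1/2" using d2 q dq by auto
    ultimately show "v j q - \<phi> j q < (v j p - \<phi> j p) + 1" unfolding dist_real_def by linarith
  qed
qed

text \<open>The weight c * rho^2 with rho = d^2 and c = 1/r^4 is at least 1 outside the ball of
  radius r, so adding it times a majorant F of v - phi restores v <= phi there.\<close>
lemma bump_dominates:
  fixes v \<phi> F d r :: real
  assumes r: "0 < r" and F: "0 \<le> F" "v - \<phi> \<le> F" and near: "d < r \<Longrightarrow> v \<le> \<phi>" and d: "0 \<le> d"
  shows "v \<le> \<phi> + 1 / r^4 * (d^2 * d^2 * F)"
proof (cases "d < r")
  case True
  then show ?thesis using near F(1) by (simp add: add_increasing2)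
next
  case False
  then have "r^2 * r^2 \<le> d^2 * d^2" using r by (intro mult_mono power_mono) auto
  then have "1 \<le> 1 / r^4 * (d^2 * d^2)" using r by (simp add: field_simps power4_eq_xxxx power2_eq_square)
  then have "F \<le> 1 / r^4 * (d^2 * d^2) * F" using F(1) by (metis mult_1 mult_right_mono)
  then show ?thesis using F(2) by (simp add: algebra_simps)
qed

text \<open>Localization for sub-solutions: a test function touching v from above on a ball
  around (t,x) can be replaced by one touching v from above on all of J_T that agrees with
  it to first order at (t,x) (at all representatives of that point).\<close>
lemma localize_above:
  assumes uv: "usc_JT N T v" and \<phi>: "C1star N T \<phi> \<phi>t \<phi>x" and r: "0 < r"
    and loc: "\<forall>j s y. inJT N T j s y \<and> pdist i t x j s y < r \<longrightarrow> v j (s,y) \<le> \<phi> j (s,y)"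
  shows "\<exists>\<psi> \<psi>t \<psi>x. C1star N T \<psi> \<psi>t \<psi>x \<and> (\<forall>j s y. inJT N T j s y \<longrightarrow> v j (s,y) \<le> \<psi> j (s,y))
     \<and> (\<forall>j s y. pdist i t x j s y = 0 \<longrightarrow>
           \<psi> j (s,y) = \<phi> j (s,y) \<and> \<psi>t j (s,y) = \<phi>t j (s,y) \<and> \<psi>x j (s,y) = \<phi>x j (s,y))"
proof -
  obtain F Ft Fx where F: "\<forall>p\<in>half_strip T. has_partials F (Ft p) (Fx p) p (half_strip T)"
      "continuous_on (half_strip T) Ft" "continuous_on (half_strip T) Fx"
      "\<forall>p\<in>half_strip T. 0 \<le> F p" "\<forall>j\<in>{1..N}. \<forall>p\<in>half_strip T. v j p - \<phi> j p \<le> F p"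
    using C1_majorant_on_half_strip[OF usc_minus_C1star_locally_bounded[OF uv \<phi>]] by blast
  have F_test: "C1star N T (\<lambda>j. F) (\<lambda>j. Ft) (\<lambda>j. Fx)"
    by (rule C1star_intro) (use F in \<open>auto simp: jfun_def\<close>)
  define \<rho> where "\<rho> j q = (pdist i t x j (fst q) (snd q))^2" for j q
  define \<rho>t where "\<rho>t (j::nat) (q::real \<times> real) = 2 * (fst q - t)" for j q
  define \<rho>x where "\<rho>x j (q::real \<times> real) = 2 * (snd q + (if i = j then -x else x))" for j q
  define c where "c = 1 / r^4"
  define \<psi> where "\<psi> j q = \<phi> j q + c * (\<rho> j q * \<rho> j q * F q)" for j q
  define \<psi>t where
    "\<psi>t j q = \<phi>t j q + c * (\<rho> j q * \<rho> j q * Ft q + (\<rho> j q * \<rho>t j q + \<rho>t j q * \<rho> j q) * F q)" for j q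
  define \<psi>x where
    "\<psi>x j q = \<phi>x j q + c * (\<rho> j q * \<rho> j q * Fx q + (\<rho> j q * \<rho>x j q + \<rho>x j q * \<rho> j q) * F q)" for j q
  have \<rho>_test: "C1star N T \<rho> \<rho>t \<rho>x"
    unfolding \<rho>_def \<rho>t_def \<rho>x_def by (rule C1star_sq_pdist)
  have "C1star N T \<psi> \<psi>t \<psi>x"
    unfolding \<psi>_def \<psi>t_def \<psi>x_def
    by (rule C1star_add[OF \<phi> C1star_scale[OF C1star_mult[OF C1star_mult[OF \<rho>_test \<rho>_test] F_test]]])
  moreover have "v j (s,y) \<le> \<psi> j (s,y)" if "inJT N T j s y" for j s y
  proof -
    have "(s,y) \<in> half_strip T" "j \<in> {1..N}" using that unfolding inJT_def by auto
    then have "v j (s,y) \<le> \<phi> j (s,y)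
        + 1 / r^4 * ((pdist i t x j s y)^2 * (pdist i t x j s y)^2 * F (s,y))"
      by (intro bump_dominates[OF r]) (use F(4,5) loc that in \<open>auto simp: pdist_def\<close>)
    then show ?thesis unfolding \<psi>_def \<rho>_def c_def by simp
  qed
  moreover have "\<psi> j (s,y) = \<phi> j (s,y) \<and> \<psi>t j (s,y) = \<phi>t j (s,y) \<and> \<psi>x j (s,y) = \<phi>x j (s,y)"
    if "pdist i t x j s y = 0" for j s y
    using that unfolding \<psi>_def \<psi>t_def \<psi>x_def \<rho>_def by simp
  ultimately show ?thesis by blast
qed

lemma localize_below:
  assumes lv: "lsc_JT N T v" and \<phi>: "C1star N T \<phi> \<phi>t \<phi>x" and r: "0 < r"
    and loc: "\<forall>j s y. inJT N T j s y \<and> pdist i t x j s y < r \<longrightarrow> \<phi> j (s,y) \<le> v j (s,y)"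
  shows "\<exists>\<psi> \<psi>t \<psi>x. C1star N T \<psi> \<psi>t \<psi>x \<and> (\<forall>j s y. inJT N T j s y \<longrightarrow> \<psi> j (s,y) \<le> v j (s,y))
     \<and> (\<forall>j s y. pdist i t x j s y = 0 \<longrightarrow>
           \<psi> j (s,y) = \<phi> j (s,y) \<and> \<psi>t j (s,y) = \<phi>t j (s,y) \<and> \<psi>x j (s,y) = \<phi>x j (s,y))"
proof -
  have "\<forall>j s y. inJT N T j s y \<and> pdist i t x j s y < r \<longrightarrow> - v j (s,y) \<le> - \<phi> j (s,y)"
    using loc by simp
  from localize_above[OF usc_JT_neg[OF lv] C1star_neg[OF \<phi>] r this]
  obtain \<psi> \<psi>t \<psi>x where \<psi>: "C1star N T \<psi> \<psi>t \<psi>x"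
    and above: "\<forall>j s y. inJT N T j s y \<longrightarrow> - v j (s,y) \<le> \<psi> j (s,y)"
    and agree: "\<forall>j s y. pdist i t x j s y = 0 \<longrightarrow>
           \<psi> j (s,y) = - \<phi> j (s,y) \<and> \<psi>t j (s,y) = - \<phi>t j (s,y) \<and> \<psi>x j (s,y) = - \<phi>x j (s,y)"
    by blast
  show ?thesis
  proof (intro exI conjI)
    show "C1star N T (\<lambda>j p. - \<psi> j p) (\<lambda>j p. - \<psi>t j p) (\<lambda>j p. - \<psi>x j p)"
      by (rule C1star_neg[OF \<psi>])
  qed (use above agree in force)+
qed


subsection \<open>The Hamiltonians\<close>

lemma Hminus_eq:
  fixes Hi :: "real \<Rightarrow> real"
  assumes dec: "\<forall>p q. p \<le> q \<and> q \<le> p0 \<longrightarrow> Hi q \<le> Hi p"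
    and inc: "\<forall>p q. p0 \<le> p \<and> p \<le> q \<longrightarrow> Hi p \<le> Hi q"
  shows "Hminus Hi w = Hi (min w p0)"
  unfolding Hminus_def
proof (rule cInf_eq_minimum)
  show "Hi (min w p0) \<in> (\<lambda>q. Hi (w + q)) ` {..0}"
    by (rule image_eqI[of _ _ "min w p0 - w"]) auto
  fix y assume "y \<in> (\<lambda>q. Hi (w + q)) ` {..0}"
  then obtain q where q: "q \<le> 0" "y = Hi (w + q)" by auto
  show "Hi (min w p0) \<le> y"
  proof (cases "w + q \<le> p0")
    case True
    then show ?thesis using dec[rule_format, of "w+q" "min w p0"] q by auto
  next
    case False
    then show ?thesis using inc[rule_format, of p0 "w+q"] q by auto
  qed
qed

lemma A1'_minimum_points:
  assumes "A1' N H"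
  obtains P0 where "\<And>j. j \<in> {1..N} \<Longrightarrow> (\<forall>a b. a \<le> b \<and> b \<le> P0 j \<longrightarrow> H j b \<le> H j a)
      \<and> (\<forall>a b. P0 j \<le> a \<and> a \<le> b \<longrightarrow> H j a \<le> H j b)"
proof -
  have "\<forall>j\<in>{1..N}. \<exists>p0. (\<forall>a b. a \<le> b \<and> b \<le> p0 \<longrightarrow> H j b \<le> H j a)
      \<and> (\<forall>a b. p0 \<le> a \<and> a \<le> b \<longrightarrow> H j a \<le> H j b)"
    using assms unfolding A1'_def by blast
  then show ?thesis using that by metis
qed

lemma A1'_Hminus_le:
  assumes "A1' N H" and j: "j \<in> {1..N}"
  shows "Hminus (H j) w \<le> H j w"
proof -
  obtain P0 where P0: "\<And>j. j \<in> {1..N} \<Longrightarrow> (\<forall>a b. a \<le> b \<and> b \<le> P0 j \<longrightarrow> H j b \<le> H j a)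
      \<and> (\<forall>a b. P0 j \<le> a \<and> a \<le> b \<longrightarrow> H j a \<le> H j b)"
    by (rule A1'_minimum_points[OF assms(1)]) blast
  note mono = P0[OF j]
  have "Hminus (H j) w = H j (min w (P0 j))" using Hminus_eq mono by blast
  also have "\<dots> \<le> H j w" using mono by (cases "w \<le> P0 j") (auto simp: min_def)
  finally show ?thesis .
qed

lemma A1'_large_value:
  assumes "A1' N H" and j: "j \<in> {1..N}"
  shows "\<exists>w\<ge>b. M \<le> H j w"
proof -
  have "filterlim (H j) at_top at_infinity" using assms unfolding A1'_def by blast
  then have "eventually (\<lambda>w. M \<le> H j w) at_infinity" using filterlim_at_top by blast
  then obtain c where c: "\<And>w. c \<le> norm w \<Longrightarrow> M \<le> H j w" unfolding eventually_at_infinity by blast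
  show ?thesis using c[of "max b \<bar>c\<bar>"] by (intro exI[of _ "max b \<bar>c\<bar>"]) auto
qed

lemma H0_ge: "j \<in> {1..N} \<Longrightarrow> Hminus (H j) (p j) \<le> H0 N H p"
  unfolding H0_def by (rule Max_ge) auto

lemma H0_attained: "1 \<le> N \<Longrightarrow> \<exists>k\<in>{1..N}. H0 N H p = Hminus (H k) (p k)"
proof -
  assume "1 \<le> N"
  then have "H0 N H p \<in> (\<lambda>i. Hminus (H i) (p i)) ` {1..N}"
    unfolding H0_def by (intro Max_in) auto
  then show ?thesis by auto
qed


subsection \<open>Relaxed test conditions and slope tilting at the junction\<close>

definition relaxed_sub_tests ::
    "nat \<Rightarrow> real \<Rightarrow> (nat \<Rightarrow> real \<Rightarrow> real) \<Rightarrow> (nat \<Rightarrow> real \<times> real \<Rightarrow> real) \<Rightarrow> bool" where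
  "relaxed_sub_tests N T H u \<longleftrightarrow>
     (\<forall>\<phi> \<phi>t \<phi>x i t x. C1star N T \<phi> \<phi>t \<phi>x \<and> inJT N T i t x
        \<and> (\<forall>j s y. inJT N T j s y \<longrightarrow> u j (s,y) \<le> \<phi> j (s,y))
        \<and> u i (t,x) = \<phi> i (t,x) \<longrightarrow>
          (0 < x \<longrightarrow> \<phi>t i (t,x) + H i (\<phi>x i (t,x)) \<le> 0)
        \<and> (x = 0 \<longrightarrow> (\<exists>j\<in>{1..N}. \<phi>t j (t,0) + H j (\<phi>x j (t,0)) \<le> 0)
               \<or> \<phi>t i (t,0) + H0 N H (\<lambda>j. \<phi>x j (t,0)) \<le> 0))"

definition relaxed_super_tests ::
    "nat \<Rightarrow> real \<Rightarrow> (nat \<Rightarrow> real \<Rightarrow> real) \<Rightarrow> (nat \<Rightarrow> real \<times> real \<Rightarrow> real) \<Rightarrow> bool" where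
  "relaxed_super_tests N T H u \<longleftrightarrow>
     (\<forall>\<phi> \<phi>t \<phi>x i t x. C1star N T \<phi> \<phi>t \<phi>x \<and> inJT N T i t x
        \<and> (\<forall>j s y. inJT N T j s y \<longrightarrow> u j (s,y) \<ge> \<phi> j (s,y))
        \<and> u i (t,x) = \<phi> i (t,x) \<longrightarrow>
          (0 < x \<longrightarrow> \<phi>t i (t,x) + H i (\<phi>x i (t,x)) \<ge> 0)
        \<and> (x = 0 \<longrightarrow> (\<exists>j\<in>{1..N}. \<phi>t j (t,0) + H j (\<phi>x j (t,0)) \<ge> 0)
               \<or> \<phi>t i (t,0) + H0 N H (\<lambda>j. \<phi>x j (t,0)) \<ge> 0))"

lemma relaxed_sub_testsD:
  assumes "relaxed_sub_tests N T H u" "C1star N T \<phi> \<phi>t \<phi>x" "inJT N T i t x"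
    "\<forall>j s y. inJT N T j s y \<longrightarrow> u j (s,y) \<le> \<phi> j (s,y)" "u i (t,x) = \<phi> i (t,x)"
  shows "0 < x \<Longrightarrow> \<phi>t i (t,x) + H i (\<phi>x i (t,x)) \<le> 0"
    and "x = 0 \<Longrightarrow> (\<exists>j\<in>{1..N}. \<phi>t j (t,0) + H j (\<phi>x j (t,0)) \<le> 0)
           \<or> \<phi>t i (t,0) + H0 N H (\<lambda>j. \<phi>x j (t,0)) \<le> 0"
  using assms unfolding relaxed_sub_tests_def by blast+

lemma relaxed_super_testsD:
  assumes "relaxed_super_tests N T H u" "C1star N T \<phi> \<phi>t \<phi>x" "inJT N T i t x"
    "\<forall>j s y. inJT N T j s y \<longrightarrow> \<phi> j (s,y) \<le> u j (s,y)" "u i (t,x) = \<phi> i (t,x)"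
  shows "0 < x \<Longrightarrow> 0 \<le> \<phi>t i (t,x) + H i (\<phi>x i (t,x))"
    and "x = 0 \<Longrightarrow> (\<exists>j\<in>{1..N}. 0 \<le> \<phi>t j (t,0) + H j (\<phi>x j (t,0)))
           \<or> 0 \<le> \<phi>t i (t,0) + H0 N H (\<lambda>j. \<phi>x j (t,0))"
  using assms unfolding relaxed_super_tests_def by blast+

text \<open>Sub-solutions: tilting a global test function by slopes w_j - p_j >= 0, where w_j = p_j
  if already H_j(p_j) >= H0(p) and otherwise H_j(w_j) >= H0(p) by coercivity, makes either
  alternative of the relaxed condition imply the H0 condition at the original slopes p.\<close>
lemma junction_sub_from_relaxed:
  assumes N: "1 \<le> N" and A: "A1' N H" and relaxed: "relaxed_sub_tests N T H u"
    and \<psi>: "C1star N T \<psi> \<psi>t \<psi>x" and above: "\<forall>j s y. inJT N T j s y \<longrightarrow> u j (s,y) \<le> \<psi> j (s,y)"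
    and P: "inJT N T i t 0" and touch: "u i (t,0) = \<psi> i (t,0)"
  shows "\<psi>t i (t,0) + H0 N H (\<lambda>j. \<psi>x j (t,0)) \<le> 0"
proof -
  have i: "i \<in> {1..N}" and t: "0 < t" "t < T" using P unfolding inJT_def by auto
  define p where "p j = \<psi>x j (t,0)" for j
  define M where "M = H0 N H p"
  have "\<forall>j\<in>{1..N}. \<exists>w. p j \<le> w \<and> M \<le> H j w" using A1'_large_value[OF A] by blast
  then obtain W where W: "\<And>j. j \<in> {1..N} \<Longrightarrow> p j \<le> W j \<and> M \<le> H j (W j)"
    using bchoice by metis
  define w where "w j = (if M \<le> H j (p j) then p j else W j)" for j
  have w_ge: "p j \<le> w j" and Hw: "M \<le> H j (w j)" if "j \<in> {1..N}" for j
    using W[OF that] unfolding w_def by auto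
  have "u j (s,y) \<le> \<psi> j (s,y) + (w j - p j) * snd (s,y)" if "inJT N T j s y" for j s y
    using above that w_ge[of j] unfolding inJT_def by (simp add: add_increasing2)
  then have "(\<exists>j\<in>{1..N}. \<psi>t j (t,0) + H j (\<psi>x j (t,0) + (w j - p j)) \<le> 0)
      \<or> \<psi>t i (t,0) + H0 N H (\<lambda>j. \<psi>x j (t,0) + (w j - p j)) \<le> 0"
    using relaxed_sub_testsD(2)[OF relaxed C1star_tilted[OF \<psi>] P] touch by simp
  then have "(\<exists>j\<in>{1..N}. \<psi>t j (t,0) + H j (w j) \<le> 0) \<or> \<psi>t i (t,0) + H0 N H w \<le> 0"
    by (simp add: p_def)
  then show ?thesis
  proof
    assume "\<exists>j\<in>{1..N}. \<psi>t j (t,0) + H j (w j) \<le> 0"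
    then obtain j where j: "j \<in> {1..N}" "\<psi>t j (t,0) + H j (w j) \<le> 0" by blast
    moreover have "\<psi>t j (t,0) = \<psi>t i (t,0)" by (rule C1star_junction_dt_eq[OF \<psi> j(1) i t])
    ultimately show ?thesis using Hw[OF j(1)] unfolding M_def p_def by simp
  next
    assume h: "\<psi>t i (t,0) + H0 N H w \<le> 0"
    obtain k where k: "k \<in> {1..N}" "M = Hminus (H k) (p k)"
      using H0_attained[OF N] unfolding M_def by blast
    then have "w k = p k" using A1'_Hminus_le[OF A k(1)] unfolding w_def by simp
    then have "M \<le> H0 N H w" using H0_ge[OF k(1), of H w] k(2) by simp
    then show ?thesis using h unfolding M_def p_def by simp
  qed
qed

text \<open>Super-solutions: tilting down to the slopes w_j = min p_j p0_j leaves H0 unchanged and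
  makes H_j(w_j) = H_j^-(p_j) <= H0(p).\<close>
lemma junction_super_from_relaxed:
  assumes A: "A1' N H" and relaxed: "relaxed_super_tests N T H u"
    and \<psi>: "C1star N T \<psi> \<psi>t \<psi>x" and below: "\<forall>j s y. inJT N T j s y \<longrightarrow> \<psi> j (s,y) \<le> u j (s,y)"
    and P: "inJT N T i t 0" and touch: "u i (t,0) = \<psi> i (t,0)"
  shows "0 \<le> \<psi>t i (t,0) + H0 N H (\<lambda>j. \<psi>x j (t,0))"
proof -
  have i: "i \<in> {1..N}" and t: "0 < t" "t < T" using P unfolding inJT_def by auto
  define p where "p j = \<psi>x j (t,0)" for j
  obtain P0 where P0: "\<And>j. j \<in> {1..N} \<Longrightarrow> (\<forall>a b. a \<le> b \<and> b \<le> P0 j \<longrightarrow> H j b \<le> H j a)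
      \<and> (\<forall>a b. P0 j \<le> a \<and> a \<le> b \<longrightarrow> H j a \<le> H j b)"
    by (rule A1'_minimum_points[OF A]) blast
  have Hm: "Hminus (H j) v = H j (min v (P0 j))" if "j \<in> {1..N}" for j v
    using Hminus_eq P0[OF that] by blast
  define w where "w j = min (p j) (P0 j)" for j
  have Hw: "H j (w j) = Hminus (H j) (p j)" if "j \<in> {1..N}" for j
    using Hm[OF that] unfolding w_def by simp
  have H0w: "H0 N H w = H0 N H p"
    unfolding H0_def using Hm by (intro arg_cong[where f=Max] image_cong) (auto simp: w_def)
  have "\<psi> j (s,y) + (w j - p j) * snd (s,y) \<le> u j (s,y)" if "inJT N T j s y" for j s y
  proof -
    have "(w j - p j) * y \<le> 0"
      using that unfolding inJT_def w_def by (intro mult_nonpos_nonneg) auto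
    moreover have "\<psi> j (s,y) \<le> u j (s,y)" using below that by blast
    ultimately show ?thesis by simp
  qed
  then have "(\<exists>j\<in>{1..N}. 0 \<le> \<psi>t j (t,0) + H j (\<psi>x j (t,0) + (w j - p j)))
      \<or> 0 \<le> \<psi>t i (t,0) + H0 N H (\<lambda>j. \<psi>x j (t,0) + (w j - p j))"
    using relaxed_super_testsD(2)[OF relaxed C1star_tilted[OF \<psi>] P] touch by simp
  then have "(\<exists>j\<in>{1..N}. 0 \<le> \<psi>t j (t,0) + H j (w j)) \<or> 0 \<le> \<psi>t i (t,0) + H0 N H w"
    by (simp add: p_def)
  then show ?thesis
  proof
    assume "\<exists>j\<in>{1..N}. 0 \<le> \<psi>t j (t,0) + H j (w j)"
    then obtain j where j: "j \<in> {1..N}" "0 \<le> \<psi>t j (t,0) + H j (w j)" by blast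
    moreover have "\<psi>t j (t,0) = \<psi>t i (t,0)" by (rule C1star_junction_dt_eq[OF \<psi> j(1) i t])
    ultimately show ?thesis using Hw[OF j(1)] H0_ge[OF j(1), of H p] unfolding p_def by simp
  qed (simp add: H0w p_def[abs_def])
qed


lemma subsolution_imp_relaxed: "subsolution N T H u \<Longrightarrow> relaxed_sub_tests N T H u"
  unfolding subsolution_def relaxed_sub_tests_def using zero_less_one by blast

lemma supersolution_imp_relaxed: "supersolution N T H u \<Longrightarrow> relaxed_super_tests N T H u"
  unfolding supersolution_def relaxed_super_tests_def using zero_less_one by blast

lemma relaxed_imp_subsolution:
  assumes N: "1 \<le> N" and A: "A1' N H" and usc: "usc_JT N T u" and relaxed: "relaxed_sub_tests N T H u"
  shows "subsolution N T H u"
  unfolding subsolution_def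
proof (intro conjI allI impI)
  fix \<phi> \<phi>t \<phi>x i t x r
  assume "C1star N T \<phi> \<phi>t \<phi>x \<and> inJT N T i t x \<and> 0 < r
     \<and> (\<forall>j s y. inJT N T j s y \<and> pdist i t x j s y < r \<longrightarrow> u j (s,y) \<le> \<phi> j (s,y))
     \<and> u i (t,x) = \<phi> i (t,x)"
  then have \<phi>: "C1star N T \<phi> \<phi>t \<phi>x" and P: "inJT N T i t x" and r: "0 < r"
    and loc: "\<forall>j s y. inJT N T j s y \<and> pdist i t x j s y < r \<longrightarrow> u j (s,y) \<le> \<phi> j (s,y)"
    and touch: "u i (t,x) = \<phi> i (t,x)" by blast+
  obtain \<psi> \<psi>t \<psi>x where \<psi>: "C1star N T \<psi> \<psi>t \<psi>x"
    and above: "\<forall>j s y. inJT N T j s y \<longrightarrow> u j (s,y) \<le> \<psi> j (s,y)"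
    and agree: "\<forall>j s y. pdist i t x j s y = 0 \<longrightarrow>
       \<psi> j (s,y) = \<phi> j (s,y) \<and> \<psi>t j (s,y) = \<phi>t j (s,y) \<and> \<psi>x j (s,y) = \<phi>x j (s,y)"
    using localize_above[OF usc \<phi> r loc] by blast
  have at_P: "\<psi> i (t,x) = \<phi> i (t,x)" "\<psi>t i (t,x) = \<phi>t i (t,x)" "\<psi>x i (t,x) = \<phi>x i (t,x)"
    using agree pdist_self by blast+
  have touch': "u i (t,x) = \<psi> i (t,x)" using touch at_P by simp
  show "\<phi>t i (t,x) + H i (\<phi>x i (t,x)) \<le> 0" if "0 < x"
    using relaxed_sub_testsD(1)[OF relaxed \<psi> P above touch' that] at_P by simp
  show "\<phi>t i (t,0) + H0 N H (\<lambda>j. \<phi>x j (t,0)) \<le> 0" if x: "x = 0"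
  proof -
    have "\<psi>t i (t,0) + H0 N H (\<lambda>j. \<psi>x j (t,0)) \<le> 0"
      by (rule junction_sub_from_relaxed[OF N A relaxed \<psi> above]) (use P touch' x in simp_all)
    moreover have "(\<lambda>j. \<psi>x j (t,0)) = (\<lambda>j. \<phi>x j (t,0))" using agree pdist_junction x by blast
    ultimately show ?thesis using at_P x by simp
  qed
qed (rule usc)

lemma relaxed_imp_supersolution:
  assumes A: "A1' N H" and lsc: "lsc_JT N T u" and relaxed: "relaxed_super_tests N T H u"
  shows "supersolution N T H u"
  unfolding supersolution_def
proof (intro conjI allI impI)
  fix \<phi> \<phi>t \<phi>x i t x r
  assume "C1star N T \<phi> \<phi>t \<phi>x \<and> inJT N T i t x \<and> 0 < r
     \<and> (\<forall>j s y. inJT N T j s y \<and> pdist i t x j s y < r \<longrightarrow> \<phi> j (s,y) \<le> u j (s,y))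
     \<and> u i (t,x) = \<phi> i (t,x)"
  then have \<phi>: "C1star N T \<phi> \<phi>t \<phi>x" and P: "inJT N T i t x" and r: "0 < r"
    and loc: "\<forall>j s y. inJT N T j s y \<and> pdist i t x j s y < r \<longrightarrow> \<phi> j (s,y) \<le> u j (s,y)"
    and touch: "u i (t,x) = \<phi> i (t,x)" by blast+
  obtain \<psi> \<psi>t \<psi>x where \<psi>: "C1star N T \<psi> \<psi>t \<psi>x"
    and below: "\<forall>j s y. inJT N T j s y \<longrightarrow> \<psi> j (s,y) \<le> u j (s,y)"
    and agree: "\<forall>j s y. pdist i t x j s y = 0 \<longrightarrow>
       \<psi> j (s,y) = \<phi> j (s,y) \<and> \<psi>t j (s,y) = \<phi>t j (s,y) \<and> \<psi>x j (s,y) = \<phi>x j (s,y)"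
    using localize_below[OF lsc \<phi> r loc] by blast
  have at_P: "\<psi> i (t,x) = \<phi> i (t,x)" "\<psi>t i (t,x) = \<phi>t i (t,x)" "\<psi>x i (t,x) = \<phi>x i (t,x)"
    using agree pdist_self by blast+
  have touch': "u i (t,x) = \<psi> i (t,x)" using touch at_P by simp
  show "0 \<le> \<phi>t i (t,x) + H i (\<phi>x i (t,x))" if "0 < x"
    using relaxed_super_testsD(1)[OF relaxed \<psi> P below touch' that] at_P by simp
  show "0 \<le> \<phi>t i (t,0) + H0 N H (\<lambda>j. \<phi>x j (t,0))" if x: "x = 0"
  proof -
    have "0 \<le> \<psi>t i (t,0) + H0 N H (\<lambda>j. \<psi>x j (t,0))"
      by (rule junction_super_from_relaxed[OF A relaxed \<psi> below]) (use P touch' x in simp_all)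
    moreover have "(\<lambda>j. \<psi>x j (t,0)) = (\<lambda>j. \<phi>x j (t,0))" using agree pdist_junction x by blast
    ultimately show ?thesis using at_P x by simp
  qed
qed (rule lsc)


theorem mainTheorem5:
  fixes N :: nat and T :: real and H :: "nat \<Rightarrow> real \<Rightarrow> real"
    and u :: "nat \<Rightarrow> real \<times> real \<Rightarrow> real"
  assumes "1 \<le> N" and "0 < T" and "A1' N H" and "jfun N T u"
  shows "(usc_JT N T u \<longrightarrow>
           (subsolution N T H u \<longleftrightarrow>
             (\<forall>\<phi> \<phi>t \<phi>x i t x. C1star N T \<phi> \<phi>t \<phi>x \<and> inJT N T i t x
                \<and> (\<forall>j s y. inJT N T j s y \<longrightarrow> u j (s,y) \<le> \<phi> j (s,y))
                \<and> u i (t,x) = \<phi> i (t,x) \<longrightarrow>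
                  (0 < x \<longrightarrow> \<phi>t i (t,x) + H i (\<phi>x i (t,x)) \<le> 0)
                \<and> (x = 0 \<longrightarrow> (\<exists>j\<in>{1..N}. \<phi>t j (t,0) + H j (\<phi>x j (t,0)) \<le> 0)
                       \<or> \<phi>t i (t,0) + H0 N H (\<lambda>j. \<phi>x j (t,0)) \<le> 0))))
       \<and> (lsc_JT N T u \<longrightarrow>
           (supersolution N T H u \<longleftrightarrow>
             (\<forall>\<phi> \<phi>t \<phi>x i t x. C1star N T \<phi> \<phi>t \<phi>x \<and> inJT N T i t x
                \<and> (\<forall>j s y. inJT N T j s y \<longrightarrow> u j (s,y) \<ge> \<phi> j (s,y))
                \<and> u i (t,x) = \<phi> i (t,x) \<longrightarrow>
                  (0 < x \<longrightarrow> \<phi>t i (t,x) + H i (\<phi>x i (t,x)) \<ge> 0)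
                \<and> (x = 0 \<longrightarrow> (\<exists>j\<in>{1..N}. \<phi>t j (t,0) + H j (\<phi>x j (t,0)) \<ge> 0)
                       \<or> \<phi>t i (t,0) + H0 N H (\<lambda>j. \<phi>x j (t,0)) \<ge> 0))))"
proof -
  have "usc_JT N T u \<Longrightarrow> subsolution N T H u \<longleftrightarrow> relaxed_sub_tests N T H u"
    using subsolution_imp_relaxed relaxed_imp_subsolution assms(1,3) by blast
  moreover have "lsc_JT N T u \<Longrightarrow> supersolution N T H u \<longleftrightarrow> relaxed_super_tests N T H u"
    using supersolution_imp_relaxed relaxed_imp_supersolution assms(3) by blast
  ultimately show ?thesis
    unfolding relaxed_sub_tests_def relaxed_super_tests_def by blast
qed

end
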